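(* If $\Gamma\vdash M$ is derivable in $\ell\Lambda_\infty$ and $M\to N$, then $\Gamma\vdash N$ is derivable in $\ell\Lambda_\infty$.
   Context: Preterms are possibly infinite trees generated (coinductively) by $M,N ::= x \mid MN \mid \lambda x.M \mid \lambda^{\downarrow}x.M \mid \lambda^{\uparrow}x.M \mid \downarrow M \mid \uparrow M$ ($\downarrow M$ an inductive box, $\uparrow M$ a coinductive box); $M[N/x]$ is capture-avoiding substitution (coinductively defined). A pattern is $x$, $\downarrow x$ or $\uparrow x$; an environment is a finite set of patterns, each variable in at most one pattern; a linear environment is a set of variables; $\downarrow\Theta=\{\downarrow y: y\in\Theta\}$, $\uparrow\Theta=\{\uparrow y: y\in\Theta\}$; commas denote disjoint unions. The system $\ell\Lambda_\infty$ has rules (with $\Theta,\Xi$ linear): (vl) $\downarrow\Theta,\uparrow\Xi,x\vdash x$; (vi) $\downarrow\Theta,\uparrow\Xi,\downarrow x\vdash x$; (vc) $\downarrow\Theta,\uparrow\Xi,\uparrow x\vdash x$; (a) from $\Gamma,\downarrow\Theta,\uparrow\Xi\vdash M$ and $\Delta,\downarrow\Theta,\uparrow\Xi\vdash N$ infer $\Gamma,\Delta,\downarrow\Theta,\uparrow\Xi\vdash MN$; (ll) from $\Gamma,x\vdash M$ infer $\Gamma\vdash\lambda x.M$; (li) from $\Gamma,\downarrow x\vdash M$ infer $\Gamma\vdash\lambda^\downarrow x.M$; (lc) from $\Gamma,\uparrow x\vdash M$ infer $\Gamma\vdash \lambda^\uparrow x.M$; (mi) from $\downarrow\Theta,\uparrow\Xi\vdash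 M$ infer $\downarrow\Theta,\uparrow\Xi\vdash \downarrow M$; (mc) from $\downarrow\Theta,\uparrow\Xi\vdash M$ infer $\downarrow\Theta,\uparrow\Xi\vdash\uparrow M$. (mc) is coinductive, the others inductive: derivable judgments are roots of possibly infinite derivation trees in which every infinite branch contains infinitely many (mc) instances. Basic reduction $\mapsto$: $(\lambda x.M)N\mapsto M[N/x]$, $(\lambda^\downarrow x.M)(\downarrow N)\mapsto M[N/x]$, $(\lambda^\uparrow x.M)(\uparrow N)\mapsto M[N/x]$. A context $C$ is a preterm with a single hole occurring at a finite position; $M\to N$ iff $M=C[L]$, $N=C[P]$ for some context $C$ and $L\mapsto P$. *)

theory Defs
  imports Main
begin

text \<open>Variables are de Bruijn indices (natural numbers); this represents
  named preterms modulo alpha-conversion, so that capture-avoiding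
  substitution is well defined on infinite trees.\<close>

codatatype pterm =
    PVar nat
  | PApp pterm pterm
  | PLam pterm
  | PLamI pterm         (* \<lambda>\<^sup>\<down>x.M *)
  | PLamC pterm         (* \<lambda>\<^sup>\<up>x.M *)
  | PBoxI pterm
  | PBoxC pterm

primcorec shift :: "nat \<Rightarrow> pterm \<Rightarrow> pterm" where
  "shift k M = (case M of
      PVar i \<Rightarrow> PVar (if i < k then i else Suc i)
    | PApp A B \<Rightarrow> PApp (shift k A) (shift k B)
    | PLam A \<Rightarrow> PLam (shift (Suc k) A)
    | PLamI A \<Rightarrow> PLamI (shift (Suc k) A)
    | PLamC A \<Rightarrow> PLamC (shift (Suc k) A)
    | PBoxI A \<Rightarrow> PBoxI (shift k A)
    | PBoxC A \<Rightarrow> PBoxC (shift k A))"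

text \<open>Capture-avoiding substitution, coinductively defined as a (functional)
  relation: \<open>subst_rel k N M P\<close> means \<open>P = M[N/k]\<close>, where index k
  is removed (larger free indices decremented).\<close>

coinductive subst_rel :: "nat \<Rightarrow> pterm \<Rightarrow> pterm \<Rightarrow> pterm \<Rightarrow> bool" where
  s_lt: "i < k \<Longrightarrow> subst_rel k N (PVar i) (PVar i)"
| s_eq: "subst_rel k N (PVar k) N"
| s_gt: "k < i \<Longrightarrow> subst_rel k N (PVar i) (PVar (i - 1))"
| s_app: "subst_rel k N A A' \<Longrightarrow> subst_rel k N B B' \<Longrightarrow>
           subst_rel k N (PApp A B) (PApp A' B')"
| s_lam: "subst_rel (Suc k) (shift 0 N) A A' \<Longrightarrow> subst_rel k N (PLam A) (PLam A')"
| s_lamI: "subst_rel (Suc k) (shift 0 N) A A' \<Longrightarrow> subst_rel k N (PLamI A) (PLamI A')"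
| s_lamC: "subst_rel (Suc k) (shift 0 N) A A' \<Longrightarrow> subst_rel k N (PLamC A) (PLamC A')"
| s_boxI: "subst_rel k N A A' \<Longrightarrow> subst_rel k N (PBoxI A) (PBoxI A')"
| s_boxC: "subst_rel k N A A' \<Longrightarrow> subst_rel k N (PBoxC A) (PBoxC A')"

text \<open>Pattern kinds: \<open>x\<close> (linear), \<open>\<down>x\<close> (inductive), \<open>\<up>x\<close> (coinductive).
  An environment is a finite partial map from variables to pattern kinds
  (so each variable occurs in at most one pattern).\<close>

datatype pkind = PatL | PatI | PatC

type_synonym env = "nat \<rightharpoonup> pkind"

definition nonlin :: "env \<Rightarrow> bool" where
  "nonlin \<Gamma> \<longleftrightarrow> (\<forall>x. \<Gamma> x \<noteq> Some PatL)"

definition ext_env :: "pkind \<Rightarrow> env \<Rightarrow> env" where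
  "ext_env p \<Gamma> = case_nat (Some p) \<Gamma>"

text \<open>Mixed induction/coinduction: the (mc) rule is coinductive, the others
  inductive. This is the nested fixpoint \<open>\<nu>X. \<mu>Y. F(X,Y)\<close>, i.e. derivations
  in which every infinite branch passes through infinitely many (mc).\<close>

inductive ll_step :: "(env \<Rightarrow> pterm \<Rightarrow> bool) \<Rightarrow> env \<Rightarrow> pterm \<Rightarrow> bool"
  for X :: "env \<Rightarrow> pterm \<Rightarrow> bool" where
  vl: "nonlin \<Gamma> \<Longrightarrow> finite (dom \<Gamma>) \<Longrightarrow> \<Gamma> x = None \<Longrightarrow> ll_step X (\<Gamma>(x \<mapsto> PatL)) (PVar x)"
| vi: "nonlin \<Gamma> \<Longrightarrow> finite (dom \<Gamma>) \<Longrightarrow> \<Gamma> x = None \<Longrightarrow> ll_step X (\<Gamma>(x \<mapsto> PatI)) (PVar x)"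
| vc: "nonlin \<Gamma> \<Longrightarrow> finite (dom \<Gamma>) \<Longrightarrow> \<Gamma> x = None \<Longrightarrow> ll_step X (\<Gamma>(x \<mapsto> PatC)) (PVar x)"
| a: "dom \<Gamma> \<inter> dom \<Delta> = {} \<Longrightarrow> dom \<Gamma> \<inter> dom S = {} \<Longrightarrow> dom \<Delta> \<inter> dom S = {} \<Longrightarrow>
      nonlin S \<Longrightarrow> ll_step X (\<Gamma> ++ S) M \<Longrightarrow> ll_step X (\<Delta> ++ S) N \<Longrightarrow>
      ll_step X (\<Gamma> ++ \<Delta> ++ S) (PApp M N)"
| ll: "ll_step X (ext_env PatL \<Gamma>) M \<Longrightarrow> ll_step X \<Gamma> (PLam M)"
| li: "ll_step X (ext_env PatI \<Gamma>) M \<Longrightarrow> ll_step X \<Gamma> (PLamI M)"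
| lc: "ll_step X (ext_env PatC \<Gamma>) M \<Longrightarrow> ll_step X \<Gamma> (PLamC M)"
| mi: "nonlin \<Gamma> \<Longrightarrow> ll_step X \<Gamma> M \<Longrightarrow> ll_step X \<Gamma> (PBoxI M)"
| mc: "nonlin \<Gamma> \<Longrightarrow> finite (dom \<Gamma>) \<Longrightarrow> X \<Gamma> M \<Longrightarrow> ll_step X \<Gamma> (PBoxC M)"

lemma ll_step_mono [mono]: "X \<le> Y \<Longrightarrow> ll_step X \<le> ll_step Y"
proof (intro le_funI le_boolI)
  fix \<Gamma> M assume XY: "X \<le> Y" and H: "ll_step X \<Gamma> M"
  from H show "ll_step Y \<Gamma> M"
    by (induction rule: ll_step.induct) (use XY in \<open>auto intro: ll_step.intros simp del: fun_upd_apply\<close>)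
qed

coinductive derivable :: "env \<Rightarrow> pterm \<Rightarrow> bool" where
  "ll_step derivable \<Gamma> M \<Longrightarrow> derivable \<Gamma> M"

inductive basic_red :: "pterm \<Rightarrow> pterm \<Rightarrow> bool" where
  "subst_rel 0 N M P \<Longrightarrow> basic_red (PApp (PLam M) N) P"
| "subst_rel 0 N M P \<Longrightarrow> basic_red (PApp (PLamI M) (PBoxI N)) P"
| "subst_rel 0 N M P \<Longrightarrow> basic_red (PApp (PLamC M) (PBoxC N)) P"

datatype ctx =
    Hole
  | CAppL ctx pterm
  | CAppR pterm ctx
  | CLam ctx
  | CLamI ctx
  | CLamC ctx
  | CBoxI ctx
  | CBoxC ctx

primrec fill :: "ctx \<Rightarrow> pterm \<Rightarrow> pterm" where
  "fill Hole L = L"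
| "fill (CAppL C N) L = PApp (fill C L) N"
| "fill (CAppR M C) L = PApp M (fill C L)"
| "fill (CLam C) L = PLam (fill C L)"
| "fill (CLamI C) L = PLamI (fill C L)"
| "fill (CLamC C) L = PLamC (fill C L)"
| "fill (CBoxI C) L = PBoxI (fill C L)"
| "fill (CBoxC C) L = PBoxC (fill C L)"

definition red :: "pterm \<Rightarrow> pterm \<Rightarrow> bool" where
  "red M N \<longleftrightarrow> (\<exists>C L P. M = fill C L \<and> N = fill C P \<and> basic_red L P)"

end

theory Submission
  imports Defs
begin

text \<open>
  Subject reduction is proved as in the finitary case, from a substitution lemma, but the judgement
  is a mixed fixpoint: a derivation is a coinductive tree of inductive layers, and \<open>ll_step X\<close>
  is one such layer over the hypotheses \<open>X\<close>. Every property of \<open>derivable\<close> that needs to look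
  below a coinductive box (shifting, weakening by non-linear hypotheses, substitution for a
  non-linear variable) is proved by coinduction up to \<open>derivable\<close>: one exhibits a relation \<open>R\<close>
  and shows, by induction over a single layer, that every pair in \<open>R\<close> is built by one layer from
  pairs in \<open>R\<close> or derivable pairs; \<open>R\<close> is only needed at the (mc) leaves of the layer.
  Substitution for a linear variable is a plain induction over one layer, since a linear
  variable cannot occur below a box at all, and reduction in a context is an induction over the
  finite context.
\<close>

lemma shift_simps [simp]:
  "shift k (PVar i) = PVar (if i < k then i else Suc i)"
  "shift k (PApp A B) = PApp (shift k A) (shift k B)"
  "shift k (PLam A) = PLam (shift (Suc k) A)"
  "shift k (PLamI A) = PLamI (shift (Suc k) A)"
  "shift k (PLamC A) = PLamC (shift (Suc k) A)"
  "shift k (PBoxI A) = PBoxI (shift k A)"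
  "shift k (PBoxC A) = PBoxC (shift k A)"
  by (subst shift.code; simp)+

primrec plam :: "pkind \<Rightarrow> pterm \<Rightarrow> pterm" where
  "plam PatL = PLam"
| "plam PatI = PLamI"
| "plam PatC = PLamC"

lemma shift_plam [simp]: "shift k (plam p A) = plam p (shift (Suc k) A)"
  by (cases p) simp_all

inductive_simps subst_rel_simps:
  "subst_rel k N (PVar x) P" "subst_rel k N (PApp A B) P" "subst_rel k N (PLam A) P"
  "subst_rel k N (PLamI A) P" "subst_rel k N (PLamC A) P" "subst_rel k N (PBoxI A) P"
  "subst_rel k N (PBoxC A) P"

lemma subst_rel_PVar:
  "subst_rel k N (PVar x) P \<longleftrightarrow> P = (if x = k then N else PVar (if x < k then x else x - 1))"
  by (auto simp: subst_rel_simps)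

lemma subst_rel_plam:
  "subst_rel k N (plam p A) P \<longleftrightarrow> (\<exists>A'. P = plam p A' \<and> subst_rel (Suc k) (shift 0 N) A A')"
  by (cases p) (auto simp: subst_rel_simps)

lemma dom_ext_env: "dom (ext_env p E) = insert 0 (Suc ` dom E)"
proof (rule set_eqI)
  fix j show "j \<in> dom (ext_env p E) \<longleftrightarrow> j \<in> insert 0 (Suc ` dom E)"
    by (cases j) (auto simp: ext_env_def)
qed

lemma finite_dom_ext_env [simp]: "finite (dom (ext_env p E)) \<longleftrightarrow> finite (dom E)"
  by (simp add: dom_ext_env finite_image_iff)

lemma ext_env_0 [simp]: "ext_env p E 0 = Some p"
  by (simp add: ext_env_def)

lemma ext_env_Suc [simp]: "ext_env p E (Suc k) = E k"
  by (simp add: ext_env_def)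

lemma nonlin_map_add: "nonlin A \<Longrightarrow> nonlin B \<Longrightarrow> nonlin (A ++ B)"
  by (auto simp: nonlin_def map_add_def split: option.splits)

lemma nonlin_map_add_upd_None:
  assumes "nonlin (A(x := None))" "nonlin (B(x := None))"
  shows "nonlin ((A ++ B)(x := None))"
  unfolding nonlin_def
proof
  fix j show "((A ++ B)(x := None)) j \<noteq> Some PatL"
    using assms unfolding nonlin_def
    by (cases "j = x") (auto simp: map_add_def split: option.split dest: spec[of _ j])
qed

lemma map_le_SomeD: "f \<subseteq>\<^sub>m g \<Longrightarrow> f x = Some y \<Longrightarrow> g x = Some y"
  unfolding map_le_def by (metis domI)

text \<open>\<open>E\<^sub>1 ++ E\<^sub>2\<close> with \<open>compat_env E\<^sub>1 E\<^sub>2\<close> is the environment \<open>\<Gamma>, \<Delta>, \<down>\<Theta>, \<up>\<Xi>\<close> of rule (a):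
  the premises may share only non-linear patterns, which form the part \<open>\<down>\<Theta>, \<up>\<Xi>\<close>.\<close>

definition compat_env :: "env \<Rightarrow> env \<Rightarrow> bool" where
  "compat_env A B \<longleftrightarrow> (\<forall>j a b. A j = Some a \<longrightarrow> B j = Some b \<longrightarrow> a = b \<and> a \<noteq> PatL)"

lemma compat_env_sym: "compat_env A B \<Longrightarrow> compat_env B A"
  by (auto simp: compat_env_def)

lemma compat_env_map_add_comm: "compat_env A B \<Longrightarrow> A ++ B = B ++ A"
  by (rule ext) (auto simp: compat_env_def map_add_def split: option.splits)

lemma map_le_map_add_compat: "compat_env A B \<Longrightarrow> A \<subseteq>\<^sub>m A ++ B"
  using compat_env_map_add_comm map_le_iff_map_add_commute by blast

lemma compat_env_map_le: "A \<subseteq>\<^sub>m A' \<Longrightarrow> compat_env A' C \<Longrightarrow> compat_env A C"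
  unfolding compat_env_def map_le_def by (metis domI)

lemma compat_env_add_left_iff:
  assumes "compat_env A B"
  shows "compat_env (A ++ B) C \<longleftrightarrow> compat_env A C \<and> compat_env B C"
proof
  assume "compat_env (A ++ B) C"
  then show "compat_env A C \<and> compat_env B C"
    using compat_env_map_le map_le_map_add_compat[OF assms] map_le_map_add by blast
next
  assume "compat_env A C \<and> compat_env B C"
  then show "compat_env (A ++ B) C" unfolding compat_env_def by (simp add: map_add_Some_iff) blast
qed

lemma compat_env_add_right_iff:
  "compat_env A B \<Longrightarrow> compat_env C (A ++ B) \<longleftrightarrow> compat_env C A \<and> compat_env C B"
  using compat_env_add_left_iff compat_env_sym by blast

lemma compat_env_add_nonlin:
  "compat_env A B \<Longrightarrow> nonlin W \<Longrightarrow> compat_env (A ++ W) (B ++ W)"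
  by (auto simp: compat_env_def nonlin_def map_add_def split: option.splits)

text \<open>De Bruijn bookkeeping: \<open>env_ins k\<close> makes room for a fresh index \<open>k\<close>, matching \<open>shift k\<close>,
  and \<open>env_del k\<close> removes index \<open>k\<close>, matching \<open>subst_rel k\<close>.\<close>

definition env_ins :: "nat \<Rightarrow> env \<Rightarrow> env" where
  "env_ins k E = (\<lambda>j. if j < k then E j else if j = k then None else E (j - 1))"

definition env_del :: "nat \<Rightarrow> env \<Rightarrow> env" where
  "env_del k E = (\<lambda>j. if j < k then E j else E (Suc j))"

lemma finite_dom_env_ins: "finite (dom E) \<Longrightarrow> finite (dom (env_ins k E))"
proof -
  assume "finite (dom E)"
  moreover have "dom (env_ins k E) \<subseteq> {..<k} \<union> Suc ` dom E"
  proof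
    fix j assume "j \<in> dom (env_ins k E)"
    then show "j \<in> {..<k} \<union> Suc ` dom E"
      by (cases "j < k") (auto simp: env_ins_def intro!: image_eqI[where x="j - 1"] split: if_splits)
  qed
  ultimately show ?thesis by (meson finite_Un finite_imageI finite_lessThan finite_subset)
qed

lemma finite_dom_env_del: "finite (dom E) \<Longrightarrow> finite (dom (env_del k E))"
proof -
  assume "finite (dom E)"
  moreover have "dom (env_del k E) \<subseteq> {..<k} \<union> (\<lambda>j. j - 1) ` dom E"
  proof
    fix j assume "j \<in> dom (env_del k E)"
    then show "j \<in> {..<k} \<union> (\<lambda>j. j - 1) ` dom E"
      by (cases "j < k") (auto simp: env_del_def intro!: image_eqI[where x="Suc j"])
  qed
  ultimately show ?thesis by (meson finite_Un finite_imageI finite_lessThan finite_subset)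
qed

lemma nonlin_env_ins: "nonlin E \<Longrightarrow> nonlin (env_ins k E)"
  by (simp add: nonlin_def env_ins_def)

lemma nonlin_env_del: "nonlin E \<Longrightarrow> nonlin (env_del k E)"
  by (simp add: nonlin_def env_del_def)

lemma env_ins_map_add: "env_ins k (A ++ B) = env_ins k A ++ env_ins k B"
  by (auto simp: fun_eq_iff env_ins_def map_add_def)

lemma env_del_map_add: "env_del k (A ++ B) = env_del k A ++ env_del k B"
  by (auto simp: fun_eq_iff env_del_def map_add_def)

lemma compat_env_ins: "compat_env A B \<Longrightarrow> compat_env (env_ins k A) (env_ins k B)"
  by (auto simp: compat_env_def env_ins_def)

lemma compat_env_del: "compat_env A B \<Longrightarrow> compat_env (env_del k A) (env_del k B)"
  by (auto simp: compat_env_def env_del_def)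

lemma ext_env_env_ins: "ext_env p (env_ins k E) = env_ins (Suc k) (ext_env p E)"
  by (rule ext) (simp add: env_ins_def ext_env_def split: nat.split)

lemma ext_env_env_del: "ext_env p (env_del k E) = env_del (Suc k) (ext_env p E)"
  by (rule ext) (simp add: env_del_def ext_env_def split: nat.split)

lemma ext_env_map_add: "ext_env p (A ++ B) = ext_env p A ++ env_ins 0 B"
  by (rule ext) (simp add: env_ins_def ext_env_def map_add_def split: nat.split option.split)

lemma env_ins_0_map_add_ext_env: "env_ins 0 A ++ ext_env p B = ext_env p (A ++ B)"
  by (rule ext) (simp add: env_ins_def ext_env_def map_add_def split: nat.split option.split)

lemma compat_env_ext_env_ins: "compat_env A B \<Longrightarrow> compat_env (ext_env p A) (env_ins 0 B)"
  unfolding compat_env_def by (simp add: ext_env_def env_ins_def split: nat.split)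

lemma env_del_ext_env_0 [simp]: "env_del 0 (ext_env p E) = E"
  by (rule ext) (simp add: env_del_def)

lemma env_ins_upd:
  "env_ins k (E(x := v)) = (env_ins k E)((if x < k then x else Suc x) := v)"
  by (rule ext) (auto simp: env_ins_def)

lemma env_ins_apply: "env_ins k E (if x < k then x else Suc x) = E x"
  by (simp add: env_ins_def)

lemma env_del_upd:
  "x \<noteq> k \<Longrightarrow> env_del k (E(x := v)) = (env_del k E)((if x < k then x else x - 1) := v)"
  by (rule ext) (auto simp: env_del_def)

lemma env_del_apply: "x \<noteq> k \<Longrightarrow> env_del k E (if x < k then x else x - 1) = E x"
  by (auto simp: env_del_def)

lemma env_del_upd_same [simp]: "env_del k (E(k := v)) = env_del k E"
  by (rule ext) (simp add: env_del_def)

lemma ll_step_finite: "ll_step X E M \<Longrightarrow> finite (dom E)"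
  by (induction rule: ll_step.induct) (auto simp del: fun_upd_apply)

lemma ll_step_var:
  assumes "E x \<noteq> None" "nonlin (E(x := None))" "finite (dom E)"
  shows "ll_step X E (PVar x)"
proof -
  obtain p where p: "E x = Some p" using assms(1) by blast
  define G where "G = E(x := None)"
  have E: "E = G(x \<mapsto> p)" using p by (auto simp: G_def)
  have "nonlin G" "finite (dom G)" "G x = None" using assms(2,3) by (auto simp: G_def)
  then show ?thesis unfolding E by (cases p) (auto intro: ll_step.intros simp del: fun_upd_apply)
qed

lemma ll_step_app:
  assumes "ll_step X E1 M" "ll_step X E2 N" "compat_env E1 E2"
  shows "ll_step X (E1 ++ E2) (PApp M N)"
proof -
  define S where "S = E1 |` (dom E1 \<inter> dom E2)"
  define G where "G = E1 |` (- dom E2)"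
  define D where "D = E2 |` (- dom E1)"
  have "G ++ S = E1" unfolding G_def S_def
    by (rule ext) (auto simp: map_add_def restrict_map_def split: option.splits simp flip: not_None_eq)
  moreover have "D ++ S = E2" using assms(3) unfolding D_def S_def compat_env_def
    by (intro ext) (auto simp: map_add_def restrict_map_def split: option.splits simp flip: not_None_eq)
  moreover have "G ++ D ++ S = E1 ++ E2" using assms(3) unfolding G_def D_def S_def compat_env_def
    by (intro ext) (auto simp: map_add_def restrict_map_def split: option.splits simp flip: not_None_eq)
  moreover have "nonlin S" using assms(3) unfolding S_def compat_env_def nonlin_def
    by (auto simp: restrict_map_def)
  moreover have "dom G \<inter> dom D = {}" "dom G \<inter> dom S = {}" "dom D \<inter> dom S = {}"
    unfolding G_def D_def S_def by auto
  ultimately show ?thesis using assms(1,2) ll_step.a[of G D S X M N] by simp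
qed

lemma ll_step_induct [consumes 1, case_names var app lam boxI boxC]:
  assumes "ll_step X E M"
    and var: "\<And>E x. E x \<noteq> None \<Longrightarrow> nonlin (E(x := None)) \<Longrightarrow> finite (dom E) \<Longrightarrow> P E (PVar x)"
    and app: "\<And>E1 E2 M N. compat_env E1 E2 \<Longrightarrow> ll_step X E1 M \<Longrightarrow> P E1 M \<Longrightarrow>
      ll_step X E2 N \<Longrightarrow> P E2 N \<Longrightarrow> P (E1 ++ E2) (PApp M N)"
    and lam: "\<And>p E M. ll_step X (ext_env p E) M \<Longrightarrow> P (ext_env p E) M \<Longrightarrow> P E (plam p M)"
    and boxI: "\<And>E M. nonlin E \<Longrightarrow> ll_step X E M \<Longrightarrow> P E M \<Longrightarrow> P E (PBoxI M)"
    and boxC: "\<And>E M. nonlin E \<Longrightarrow> finite (dom E) \<Longrightarrow> X E M \<Longrightarrow> P E (PBoxC M)"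
  shows "P E M"
proof -
  have var_upd: "P (\<Gamma>(x \<mapsto> p)) (PVar x)" if "nonlin \<Gamma>" "finite (dom \<Gamma>)" "\<Gamma> x = None"
    for \<Gamma> x p
    using that by (intro var) (simp_all add: fun_upd_idem)
  from assms(1) show ?thesis
  proof (induction rule: ll_step.induct)
    case (a G D S M N)
    have "compat_env (G ++ S) (D ++ S)"
      using a.hyps(1-4) by (auto simp: compat_env_def nonlin_def map_add_def split: option.splits)
    moreover have "G ++ D ++ S = (G ++ S) ++ (D ++ S)"
      by (rule ext) (simp add: map_add_def split: option.splits)
    ultimately show ?case using app a by metis
  next
    case (ll G M) then show ?case using lam[of PatL] by simp
  next
    case (li G M) then show ?case using lam[of PatI] by simp
  next
    case (lc G M) then show ?case using lam[of PatC] by simp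
  qed (use var_upd[unfolded fun_upd_def] boxI boxC in auto)
qed

lemma ll_step_PApp_iff:
  "ll_step X E (PApp M N) \<longleftrightarrow>
    (\<exists>E1 E2. E = E1 ++ E2 \<and> compat_env E1 E2 \<and> ll_step X E1 M \<and> ll_step X E2 N)"
proof
  assume "ll_step X E (PApp M N)"
  then show "\<exists>E1 E2. E = E1 ++ E2 \<and> compat_env E1 E2 \<and> ll_step X E1 M \<and> ll_step X E2 N"
  proof (induction E "PApp M N" rule: ll_step_induct)
    case (lam p) then show ?case by (cases p) simp_all
  qed auto
qed (auto intro: ll_step_app)

lemma ll_step_plam_iff: "ll_step X E (plam p M) \<longleftrightarrow> ll_step X (ext_env p E) M"
  by (cases p) (auto intro: ll_step.intros elim: ll_step.cases)

lemma ll_step_PBoxI_iff: "ll_step X E (PBoxI M) \<longleftrightarrow> nonlin E \<and> ll_step X E M"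
  by (auto intro: ll_step.intros elim: ll_step.cases)

lemma ll_step_PBoxC_iff: "ll_step X E (PBoxC M) \<longleftrightarrow> nonlin E \<and> finite (dom E) \<and> X E M"
  by (auto intro: ll_step.intros elim: ll_step.cases)

lemma derivable_unfold: "derivable E M \<longleftrightarrow> ll_step derivable E M"
  by (subst derivable.simps) simp

lemma derivableD: "derivable E M \<Longrightarrow> ll_step derivable E M"
  by (subst (asm) derivable_unfold)

lemma derivable_finite: "derivable E M \<Longrightarrow> finite (dom E)"
  using derivable_unfold ll_step_finite by blast

lemma derivable_PApp_iff:
  "derivable E (PApp M N) \<longleftrightarrow>
    (\<exists>E1 E2. E = E1 ++ E2 \<and> compat_env E1 E2 \<and> derivable E1 M \<and> derivable E2 N)"
  by (subst derivable_unfold) (simp add: ll_step_PApp_iff flip: derivable_unfold)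

lemma derivable_PApp:
  "derivable E1 M \<Longrightarrow> derivable E2 N \<Longrightarrow> compat_env E1 E2 \<Longrightarrow> derivable (E1 ++ E2) (PApp M N)"
  using derivable_PApp_iff by blast

lemma derivable_plam_iff: "derivable E (plam p M) \<longleftrightarrow> derivable (ext_env p E) M"
  by (subst derivable_unfold) (simp add: ll_step_plam_iff flip: derivable_unfold)

lemma derivable_PBoxI_iff: "derivable E (PBoxI M) \<longleftrightarrow> nonlin E \<and> derivable E M"
  by (subst derivable_unfold) (simp add: ll_step_PBoxI_iff flip: derivable_unfold)

lemma derivable_PBoxC_iff:
  "derivable E (PBoxC M) \<longleftrightarrow> nonlin E \<and> finite (dom E) \<and> derivable E M"
  by (subst derivable_unfold) (simp add: ll_step_PBoxC_iff)

lemma ll_step_upto_derivable: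
  "derivable E M \<Longrightarrow> ll_step (\<lambda>E M. R E M \<or> derivable E M) E M"
  using ll_step_mono[of derivable "\<lambda>E M. R E M \<or> derivable E M"] derivable_unfold by blast

lemma derivable_coinduct_upto:
  assumes "R E M"
    and step: "\<And>E M. R E M \<Longrightarrow> ll_step (\<lambda>E M. R E M \<or> derivable E M) E M"
  shows "derivable E M"
  using assms(1) by (rule derivable.coinduct) (use step in blast)

section \<open>Shifting, weakening and substitution\<close>

lemma derivable_shift: "derivable E M \<Longrightarrow> derivable (env_ins k E) (shift k M)"
proof -
  define R where "R E' M' \<longleftrightarrow> (\<exists>E M k. E' = env_ins k E \<and> M' = shift k M \<and> derivable E M)"
    for E' M'
  have step: "ll_step (\<lambda>E M. R E M \<or> derivable E M) (env_ins k E) (shift k M)"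
    if "derivable E M" for k E M
    using that[THEN derivableD]
  proof (induction arbitrary: k rule: ll_step_induct)
    case (var E x)
    show ?case unfolding shift_simps
      using var nonlin_env_ins[OF var.hyps(2), of k] finite_dom_env_ins[OF var.hyps(3), of k]
      by (intro ll_step_var) (simp_all add: env_ins_upd env_ins_apply)
  next
    case app then show ?case by (simp add: env_ins_map_add ll_step_app compat_env_ins)
  next
    case lam then show ?case by (simp add: ll_step_plam_iff ext_env_env_ins)
  next
    case boxI then show ?case by (simp add: ll_step_PBoxI_iff nonlin_env_ins)
  next
    case (boxC E M)
    then have "R (env_ins k E) (shift k M)" unfolding R_def by blast
    then show ?case using boxC by (simp add: ll_step_PBoxC_iff nonlin_env_ins finite_dom_env_ins)
  qed
  assume "derivable E M"
  then have "R (env_ins k E) (shift k M)" unfolding R_def by blast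
  then show ?thesis
  proof (rule derivable_coinduct_upto)
    fix E' M' assume "R E' M'"
    then show "ll_step (\<lambda>E M. R E M \<or> derivable E M) E' M'"
      unfolding R_def[of E' M'] using step by blast
  qed
qed

lemma derivable_weaken:
  assumes "derivable E M" "nonlin W" "finite (dom W)" "compat_env W E"
  shows "derivable (W ++ E) M"
proof -
  define R where "R E' M \<longleftrightarrow> (\<exists>W E. E' = W ++ E \<and> derivable E M \<and> nonlin W \<and>
    finite (dom W) \<and> compat_env W E)" for E' M
  have step: "ll_step (\<lambda>E M. R E M \<or> derivable E M) (W ++ E) M"
    if "derivable E M" "nonlin W" "finite (dom W)" "compat_env W E" for W E M
    using that(1)[THEN derivableD] that(2-)
  proof (induction arbitrary: W rule: ll_step_induct)
    case (var E x)
    have "nonlin (W(x := None))" using var.prems(1) by (simp add: nonlin_def)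
    then show ?case using var by (intro ll_step_var nonlin_map_add_upd_None) simp_all
  next
    case (app E1 E2 M N)
    have W: "compat_env W E1" "compat_env W E2"
      using app.prems(3) compat_env_add_right_iff[OF app.hyps(1)] by auto
    have "(W ++ E1) ++ (W ++ E2) = W ++ (E1 ++ W) ++ E2" by simp
    also have "\<dots> = W ++ (W ++ E1) ++ E2"
      by (simp only: compat_env_map_add_comm[OF compat_env_sym[OF W(1)]])
    also have "\<dots> = W ++ (E1 ++ E2)" by (rule ext) (simp add: map_add_def split: option.split)
    finally have env: "W ++ (E1 ++ E2) = (W ++ E1) ++ (W ++ E2)" ..
    have "compat_env W W" using app.prems(1) unfolding compat_env_def nonlin_def by auto
    then have "compat_env (W ++ E1) (W ++ E2)"
      using W compat_env_sym[OF W(1)] app.hyps(1)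
      by (simp add: compat_env_add_left_iff[OF W(1)] compat_env_add_right_iff[OF W(2)])
    then show ?case unfolding env using app W by (intro ll_step_app) simp_all
  next
    case (lam p E M)
    have "compat_env (env_ins 0 W) (ext_env p E)"
      using compat_env_ext_env_ins[OF compat_env_sym[OF lam.prems(3)]] by (rule compat_env_sym)
    then have "ll_step (\<lambda>E M. R E M \<or> derivable E M) (env_ins 0 W ++ ext_env p E) M"
      using lam by (simp add: nonlin_env_ins finite_dom_env_ins)
    then show ?case by (simp add: ll_step_plam_iff env_ins_0_map_add_ext_env)
  next
    case boxI then show ?case by (simp add: ll_step_PBoxI_iff nonlin_map_add)
  next
    case (boxC E M)
    then have "R (W ++ E) M" unfolding R_def by blast
    then show ?case using boxC by (simp add: ll_step_PBoxC_iff nonlin_map_add)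
  qed
  have "R (W ++ E) M" unfolding R_def using assms by blast
  then show ?thesis
  proof (rule derivable_coinduct_upto)
    fix E' M' assume "R E' M'"
    then show "ll_step (\<lambda>E M. R E M \<or> derivable E M) E' M'"
      unfolding R_def[of E' M'] using step by blast
  qed
qed

lemma derivable_subst_PVar:
  assumes "F x \<noteq> None" "nonlin (F(x := None))" "finite (dom F)" "F k \<noteq> Some PatL"
    "F k = None \<or> derivable D N" "nonlin D" "finite (dom D)" "compat_env (env_del k F) D"
    "subst_rel k N (PVar x) P"
  shows "derivable (env_del k F ++ D) P"
proof (cases "x = k")
  case True
  then have "P = N" "derivable D N" using assms(1,5,9) by (auto simp: subst_rel_PVar)
  moreover have "nonlin (env_del k F)" using nonlin_env_del[OF assms(2), of k] True by simp
  ultimately show ?thesis using assms(3,8) by (simp add: derivable_weaken finite_dom_env_del)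
next
  case False
  have "nonlin ((env_del k F)((if x < k then x else x - 1) := None))"
    using nonlin_env_del[OF assms(2), of k] by (simp add: env_del_upd[OF False])
  moreover have "nonlin (D((if x < k then x else x - 1) := None))"
    using assms(6) by (simp add: nonlin_def)
  moreover have "P = PVar (if x < k then x else x - 1)"
    using assms(9) False by (simp add: subst_rel_PVar)
  ultimately show ?thesis using assms(1,3,7) derivable_unfold
    by (simp add: ll_step_var nonlin_map_add_upd_None env_del_apply[OF False] finite_dom_env_del)
qed

lemma derivable_subst_nonlin:
  assumes "derivable E M" "E k \<noteq> Some PatL" "E k = None \<or> derivable D N" "nonlin D"
    "finite (dom D)" "compat_env (env_del k E) D" "subst_rel k N M P"
  shows "derivable (env_del k E ++ D) P"
proof -
  define R where "R E' P \<longleftrightarrow> (\<exists>E M k N D. E' = env_del k E ++ D \<and> derivable E M \<and>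
    E k \<noteq> Some PatL \<and> (E k = None \<or> derivable D N) \<and> nonlin D \<and> finite (dom D) \<and>
    compat_env (env_del k E) D \<and> subst_rel k N M P)" for E' P
  have step: "ll_step (\<lambda>E M. R E M \<or> derivable E M) (env_del k E ++ D) P"
    if "derivable E M" "E k \<noteq> Some PatL" "E k = None \<or> derivable D N" "nonlin D"
      "finite (dom D)" "compat_env (env_del k E) D" "subst_rel k N M P" for E M k N D P
    using that(1)[THEN derivableD] that(2-)
  proof (induction arbitrary: k N D P rule: ll_step_induct)
    case (var F x)
    then show ?case by (intro ll_step_upto_derivable derivable_subst_PVar)
  next
    case (app E1 E2 M1 M2)
    obtain P1 P2 where P: "P = PApp P1 P2" "subst_rel k N M1 P1" "subst_rel k N M2 P2"
      using app.prems(6) by (auto simp: subst_rel_simps)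
    have "E1 k = Some a \<Longrightarrow> (E1 ++ E2) k = Some a" "E2 k = Some a \<Longrightarrow> (E1 ++ E2) k = Some a" for a
      using map_le_map_add_compat[OF app.hyps(1)] by (auto intro: map_le_SomeD)
    then have k: "E1 k \<noteq> Some PatL" "E1 k = None \<or> derivable D N"
      "E2 k \<noteq> Some PatL" "E2 k = None \<or> derivable D N"
      using app.prems(1,2) by (fastforce+)
    have cdel: "compat_env (env_del k E1) (env_del k E2)" by (rule compat_env_del[OF app.hyps(1)])
    have D: "compat_env (env_del k E1) D" "compat_env (env_del k E2) D"
      using app.prems(5) compat_env_add_left_iff[OF cdel] by (simp_all add: env_del_map_add)
    have env: "env_del k (E1 ++ E2) ++ D = (env_del k E1 ++ D) ++ (env_del k E2 ++ D)"
      unfolding env_del_map_add by (rule ext) (simp add: map_add_def split: option.split)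
    show ?case unfolding env P(1)
      using app.IH P k D app.prems(3,4) by (intro ll_step_app compat_env_add_nonlin cdel) simp_all
  next
    case (lam p E M')
    obtain P' where P: "P = plam p P'" "subst_rel (Suc k) (shift 0 N) M' P'"
      using lam.prems(6) by (auto simp: subst_rel_plam)
    have "ll_step (\<lambda>E M. R E M \<or> derivable E M) (env_del (Suc k) (ext_env p E) ++ env_ins 0 D) P'"
      using lam.prems P compat_env_ext_env_ins[OF lam.prems(5), of p]
      by (intro lam.IH) (auto simp: derivable_shift nonlin_env_ins finite_dom_env_ins ext_env_env_del)
    then show ?case by (simp add: P ll_step_plam_iff ext_env_map_add ext_env_env_del)
  next
    case (boxI E M')
    obtain P' where P: "P = PBoxI P'" "subst_rel k N M' P'"
      using boxI.prems(6) by (auto simp: subst_rel_simps)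
    then show ?case
      using boxI by (simp add: ll_step_PBoxI_iff nonlin_map_add nonlin_env_del)
  next
    case (boxC E M')
    obtain P' where P: "P = PBoxC P'" "subst_rel k N M' P'"
      using boxC.prems(6) by (auto simp: subst_rel_simps)
    moreover have "R (env_del k E ++ D) P'" unfolding R_def using boxC P by blast
    ultimately show ?case
      using boxC by (simp add: ll_step_PBoxC_iff nonlin_map_add nonlin_env_del finite_dom_env_del)
  qed
  have "R (env_del k E ++ D) P" using assms unfolding R_def by blast
  then show ?thesis
  proof (rule derivable_coinduct_upto)
    fix E' P' assume "R E' P'"
    then show "ll_step (\<lambda>E M. R E M \<or> derivable E M) E' P'"
      unfolding R_def[of E' P'] using step by blast
  qed
qed

lemma derivable_subst_unused:
  "derivable E M \<Longrightarrow> E k = None \<Longrightarrow> subst_rel k N M P \<Longrightarrow> derivable (env_del k E) P"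
  using derivable_subst_nonlin[of E M k Map.empty N P] by (simp add: nonlin_def compat_env_def)

lemma derivable_subst_lin:
  assumes "derivable E M" "E k = Some PatL" "derivable D N" "compat_env (env_del k E) D"
    "subst_rel k N M P"
  shows "derivable (env_del k E ++ D) P"
  using assms(1)[THEN derivableD] assms(2-)
proof (induction arbitrary: k N D P rule: ll_step_induct)
  case (var F x)
  have "x = k" using var.hyps(2) var.prems(1) by (auto simp: nonlin_def split: if_splits)
  then have "P = N" "nonlin (env_del k F)"
    using var.prems(4) nonlin_env_del[OF var.hyps(2), of k] by (simp_all add: subst_rel_PVar)
  then show ?case using var.hyps(3) var.prems(2,3)
    by (simp add: derivable_weaken finite_dom_env_del)
next
  case (app E1 E2 M1 M2)
  obtain P1 P2 where P: "P = PApp P1 P2" "subst_rel k N M1 P1" "subst_rel k N M2 P2"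
    using app.prems(4) by (auto simp: subst_rel_simps)
  have cdel: "compat_env (env_del k E1) (env_del k E2)" by (rule compat_env_del[OF app.hyps(1)])
  have D: "compat_env (env_del k E1) D" "compat_env (env_del k E2) D"
    using app.prems(3) compat_env_add_left_iff[OF cdel] by (simp_all add: env_del_map_add)
  have M: "derivable E1 M1" "derivable E2 M2"
    using app.hyps(2,3) derivable_unfold by blast+
  consider "E1 k = Some PatL" "E2 k = None" | "E1 k = None" "E2 k = Some PatL"
    using app.hyps(1) app.prems(1) unfolding compat_env_def map_add_Some_iff by blast
  then show ?case
  proof cases
    case 1
    have "env_del k (E1 ++ E2) ++ D = env_del k E1 ++ (env_del k E2 ++ D)"
      by (simp add: env_del_map_add)
    also have "\<dots> = env_del k E1 ++ (D ++ env_del k E2)"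
      by (simp only: compat_env_map_add_comm[OF D(2)])
    also have "\<dots> = (env_del k E1 ++ D) ++ env_del k E2" by simp
    moreover have "compat_env (env_del k E1 ++ D) (env_del k E2)"
      using cdel D(2) compat_env_sym by (simp add: compat_env_add_left_iff[OF D(1)])
    moreover have "derivable (env_del k E1 ++ D) P1" using 1(1) app.prems(2) D(1) P(2) by (rule app.IH(1))
    moreover have "derivable (env_del k E2) P2" using M(2) 1(2) P(3) by (rule derivable_subst_unused)
    ultimately show ?thesis unfolding P(1) by (simp add: derivable_PApp)
  next
    case 2
    have "compat_env (env_del k E1) (env_del k E2 ++ D)"
      using cdel D(1) by (simp add: compat_env_add_right_iff[OF D(2)])
    moreover have "derivable (env_del k E1) P1" using M(1) 2(1) P(2) by (rule derivable_subst_unused)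
    moreover have "derivable (env_del k E2 ++ D) P2" using 2(2) app.prems(2) D(2) P(3) by (rule app.IH(2))
    ultimately show ?thesis unfolding P(1) env_del_map_add map_add_assoc[symmetric]
      by (rule derivable_PApp[rotated 2])
  qed
next
  case (lam p E M')
  obtain P' where P: "P = plam p P'" "subst_rel (Suc k) (shift 0 N) M' P'"
    using lam.prems(4) by (auto simp: subst_rel_plam)
  have "derivable (env_del (Suc k) (ext_env p E) ++ env_ins 0 D) P'"
    using lam.prems P compat_env_ext_env_ins[OF lam.prems(3), of p]
    by (intro lam.IH) (auto simp: derivable_shift ext_env_env_del)
  then show ?case by (simp add: P derivable_plam_iff ext_env_map_add ext_env_env_del)
next
  case boxI then show ?case by (simp add: nonlin_def)
next
  case boxC then show ?case by (simp add: nonlin_def)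
qed

section \<open>Subject reduction\<close>

lemma derivable_beta_lin:
  "derivable (ext_env PatL E1) M \<Longrightarrow> derivable E2 N \<Longrightarrow> compat_env E1 E2 \<Longrightarrow>
    subst_rel 0 N M P \<Longrightarrow> derivable (E1 ++ E2) P"
  using derivable_subst_lin[of "ext_env PatL E1" M 0 E2 N P] by simp

lemma derivable_beta_nonlin:
  "derivable (ext_env p E1) M \<Longrightarrow> p \<noteq> PatL \<Longrightarrow> derivable E2 N \<Longrightarrow> nonlin E2 \<Longrightarrow>
    compat_env E1 E2 \<Longrightarrow> subst_rel 0 N M P \<Longrightarrow> derivable (E1 ++ E2) P"
  using derivable_subst_nonlin[of "ext_env p E1" M 0 E2 N P] derivable_finite[of E2 N] by simp

lemma derivable_basic_red:
  assumes "derivable E L" "basic_red L P"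
  shows "derivable E P"
  using assms(2)
proof cases
  case (1 N M)
  then show ?thesis
    using assms(1) derivable_plam_iff[of _ PatL, unfolded plam.simps]
    by (auto simp: derivable_PApp_iff intro: derivable_beta_lin)
next
  case (2 N M)
  then show ?thesis
    using assms(1) derivable_plam_iff[of _ PatI, unfolded plam.simps]
    by (auto simp: derivable_PApp_iff derivable_PBoxI_iff intro: derivable_beta_nonlin)
next
  case (3 N M)
  then show ?thesis
    using assms(1) derivable_plam_iff[of _ PatC, unfolded plam.simps]
    by (auto simp: derivable_PApp_iff derivable_PBoxC_iff intro: derivable_beta_nonlin)
qed

lemma derivable_fill_basic_red:
  "derivable E (fill C L) \<Longrightarrow> basic_red L P \<Longrightarrow> derivable E (fill C P)"
proof (induction C arbitrary: E)
  case Hole then show ?case by (simp add: derivable_basic_red)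
next
  case CAppL then show ?case by (fastforce simp: derivable_PApp_iff)
next
  case CAppR then show ?case by (fastforce simp: derivable_PApp_iff)
next
  case CLam then show ?case using derivable_plam_iff[of _ PatL] by simp
next
  case CLamI then show ?case using derivable_plam_iff[of _ PatI] by simp
next
  case CLamC then show ?case using derivable_plam_iff[of _ PatC] by simp
next
  case CBoxI then show ?case by (simp add: derivable_PBoxI_iff)
next
  case CBoxC then show ?case by (simp add: derivable_PBoxC_iff)
qed

theorem mainTheorem4:
  assumes "derivable \<Gamma> M"
    and "red M N"
  shows "derivable \<Gamma> N"
  using assms derivable_fill_basic_red unfolding red_def by blast

end
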